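(* Let $r\ge 1$ be an integer and let $A$ and $B$ be disjoint vertex sets with $|B|\le |A|/r^{r+3}$. Suppose the edges of the complete bipartite graph between $A$ and $B$ are $r$-locally coloured. Then all vertices of $B$ can be covered by at most $r^2$ vertex-disjoint monochromatic cycles of this bipartite graph.
   Context: An edge colouring of a graph is an $r$-local colouring if the edges incident to any vertex are coloured with at most $r$ colours; the total number of colours is not restricted. A cycle is monochromatic if all its edges have the same colour; a single vertex and a single edge are also considered to be cycles. *)

theory Defs
  imports Complex_Main
begin

text \<open>Edges of the complete bipartite graph between A and B are the doubletons {a,b}
  with a in A and b in B; an edge colouring is a function on such doubletons.\<close>

definition bip_edge :: "'a set \<Rightarrow> 'a set \<Rightarrow> 'a \<Rightarrow> 'a \<Rightarrow> bool" where
  "bip_edge A B x y \<longleftrightarrow> (x \<in> A \<and> y \<in> B) \<or> (x \<in> B \<and> y \<in> A)"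

definition local_colouring :: "nat \<Rightarrow> 'a set \<Rightarrow> 'a set \<Rightarrow> ('a set \<Rightarrow> 'c) \<Rightarrow> bool" where
  "local_colouring r A B c \<longleftrightarrow>
     (\<forall>a\<in>A. card ((\<lambda>b. c {a, b}) ` B) \<le> r) \<and>
     (\<forall>b\<in>B. card ((\<lambda>a. c {a, b}) ` A) \<le> r)"

text \<open>A monochromatic cycle of colour col in the bipartite graph, given by its list of
  distinct vertices in cyclic order. One vertex = single vertex; two vertices = single edge.\<close>
definition mono_cycle :: "'a set \<Rightarrow> 'a set \<Rightarrow> ('a set \<Rightarrow> 'c) \<Rightarrow> 'c \<Rightarrow> 'a list \<Rightarrow> bool" where
  "mono_cycle A B c col vs \<longleftrightarrow>
     vs \<noteq> [] \<and> distinct vs \<and> set vs \<subseteq> A \<union> B \<and>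
     (length vs \<ge> 2 \<longrightarrow>
        (\<forall>i < length vs. bip_edge A B (vs ! i) (vs ! (Suc i mod length vs)) \<and>
                         c {vs ! i, vs ! (Suc i mod length vs)} = col))"

end

theory Submission
  imports Defs
begin

text \<open>Every \<open>b \<in> B\<close> has a main colour in which it sees at least \<open>|A|/r\<close> vertices of \<open>A\<close>; call
  \<open>u, v \<in> B\<close> linked if they share their main colour and have at least \<open>|B|\<close> common neighbours
  in it. Counting, for each \<open>a \<in> A\<close>, the pairs of vertices of \<open>B\<close> whose main neighbourhoods
  meet at \<open>a\<close> (which carry at most \<open>r\<close> distinct main colours) shows that no \<open>r\<^sup>2 + 1\<close> vertices
  of \<open>B\<close> are pairwise unlinked once \<open>|A| \<ge> r^(r+3) |B|\<close>. A symmetric relation without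
  independent sets of size \<open>\<alpha> + 1\<close> partitions its ground set into at most \<open>\<alpha>\<close> (possibly
  degenerate) cycles, found by repeatedly removing a cycle that contains the whole neighbourhood
  of one of its vertices. Each linked cycle then becomes a monochromatic cycle by inserting
  distinct unused common neighbours between consecutive vertices; they never run out, because
  a cycle of length \<open>\<ell>\<close> uses \<open>\<ell>\<close> vertices of \<open>A\<close>, so all cycles together use at most \<open>|B|\<close>.\<close>

text \<open>A fibre of size \<open>s\<close> contributes \<open>s(s - 1) \<ge> 2(s - 1)\<close> ordered collisions.\<close>
lemma card_le_card_image_plus_collisions:
  assumes "finite K"
  shows "2 * card K \<le> 2 * card (g ` K) + card {(u,v)\<in>K\<times>K. u \<noteq> v \<and> g u = g v}"
  using assms
proof (induction K rule: finite_induct)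
  case empty
  then show ?case by simp
next
  case (insert x K)
  define P where "P K = {(u,v)\<in>K\<times>K. u \<noteq> v \<and> g u = g v}" for K
  have fin: "finite (P (insert x K))"
    by (rule finite_subset[of _ "insert x K \<times> insert x K"]) (use insert.hyps in \<open>auto simp: P_def\<close>)
  have IH: "2 * card K \<le> 2 * card (g ` K) + card (P K)"
    using insert.IH by (simp add: P_def)
  have "2 * card (insert x K) \<le> 2 * card (g ` insert x K) + card (P (insert x K))"
  proof (cases "g x \<in> g ` K")
    case True
    then obtain y where y: "y \<in> K" "g y = g x" by auto
    have "x \<noteq> y" using y insert.hyps by auto
    have "finite (P K)"
      by (rule finite_subset[of _ "K \<times> K"]) (use insert.hyps in \<open>auto simp: P_def\<close>)
    moreover have "(x,y) \<notin> P K" "(y,x) \<notin> P K" using insert.hyps by (auto simp: P_def)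
    ultimately have "card (P K) + 2 = card (insert (x,y) (insert (y,x) (P K)))"
      using \<open>x \<noteq> y\<close> by simp
    also have "\<dots> \<le> card (P (insert x K))"
      using y \<open>x \<noteq> y\<close> by (intro card_mono[OF fin]) (auto simp: P_def)
    finally show ?thesis using IH True insert.hyps by (simp add: insert_absorb)
  next
    case False
    have "card (P K) \<le> card (P (insert x K))"
      by (intro card_mono[OF fin]) (auto simp: P_def)
    then show ?thesis using IH False insert.hyps by simp
  qed
  then show ?case by (simp add: P_def)
qed

lemma sum_card_Collect_swap:
  assumes "finite X" "finite Y"
  shows "(\<Sum>y\<in>Y. card {x\<in>X. P x y}) = (\<Sum>x\<in>X. card {y\<in>Y. P x y})"
proof -
  have "(\<Sum>y\<in>Y. card {x\<in>X. P x y}) = (\<Sum>y\<in>Y. \<Sum>x\<in>X. of_bool (P x y))"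
    using assms by (simp add: Int_def conj_commute)
  also have "\<dots> = (\<Sum>x\<in>X. \<Sum>y\<in>Y. of_bool (P x y))" by (rule sum.swap)
  also have "\<dots> = (\<Sum>x\<in>X. card {y\<in>Y. P x y})"
    using assms by (simp add: Int_def conj_commute)
  finally show ?thesis .
qed

lemma sum_length_disjoint_distinct:
  fixes k :: nat
  assumes "\<forall>i<k. distinct (Q i)" "\<forall>i<k. \<forall>j<k. i \<noteq> j \<longrightarrow> set (Q i) \<inter> set (Q j) = {}"
  shows "(\<Sum>i<k. length (Q i)) = card (\<Union>i<k. set (Q i))"
proof -
  have "card (\<Union>i<k. set (Q i)) = (\<Sum>i<k. card (set (Q i)))"
    using assms(2) by (intro card_UN_disjoint) auto
  then show ?thesis using assms(1) by (simp add: distinct_card)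
qed

lemma inj_choice_from_large_sets:
  assumes "m \<le> n" "\<forall>i<m. finite (G i) \<and> n \<le> card (G i)"
  shows "\<exists>a. inj_on a {..<m} \<and> (\<forall>i<m. a i \<in> G i)"
  using assms
proof (induction m)
  case 0
  then show ?case by simp
next
  case (Suc m)
  then obtain a where a: "inj_on a {..<m}" "\<forall>i<m. a i \<in> G i" by auto
  have "card (a ` {..<m}) < card (G m)"
    using card_image_le[of "{..<m}" a] Suc.prems by fastforce
  then obtain y where y: "y \<in> G m" "y \<notin> a ` {..<m}"
    by (meson card_mono finite_imageI finite_lessThan not_le subsetI)
  have "inj_on (a(m := y)) {..<Suc m}"
    using a(1) y(2) by (simp add: lessThan_Suc inj_on_fun_updI)
  moreover have "\<forall>i<Suc m. (a(m := y)) i \<in> G i"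
    using a y by (auto simp: less_Suc_eq)
  ultimately show ?case by blast
qed

lemma square_plus_one_le_two_pow_self:
  fixes r :: nat
  assumes "r \<ge> 1"
  shows "r\<^sup>2 + 1 \<le> 2 * r ^ r"
proof (cases "r = 1")
  case False
  then have "r\<^sup>2 \<le> r ^ r" using assms by (intro power_increasing) auto
  moreover have "1 \<le> r ^ r" using assms by simp
  ultimately show ?thesis by simp
qed simp

section \<open>Cycles of a symmetric relation\<close>

definition rel_path :: "('a \<Rightarrow> 'a \<Rightarrow> bool) \<Rightarrow> 'a list \<Rightarrow> bool" where
  "rel_path H p \<longleftrightarrow> p \<noteq> [] \<and> distinct p \<and> (\<forall>i. Suc i < length p \<longrightarrow> H (p!i) (p!Suc i))"

text \<open>Degenerate cycles are allowed as in \<open>mono_cycle\<close>: a single vertex, or a single edge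
  (a list of length two, whose edge condition is then required in both directions).\<close>
definition rel_cycle :: "('a \<Rightarrow> 'a \<Rightarrow> bool) \<Rightarrow> 'a list \<Rightarrow> bool" where
  "rel_cycle H q \<longleftrightarrow> q \<noteq> [] \<and> distinct q \<and>
     (2 \<le> length q \<longrightarrow> (\<forall>i<length q. H (q!i) (q!(Suc i mod length q))))"

lemma mono_cycle_iff_rel_cycle:
  "mono_cycle A B c col vs \<longleftrightarrow>
     rel_cycle (\<lambda>x y. bip_edge A B x y \<and> c {x, y} = col) vs \<and> set vs \<subseteq> A \<union> B"
  unfolding mono_cycle_def rel_cycle_def by auto

lemma rel_path_absorbing_nbhd_of_hd:
  assumes "finite S" "S \<noteq> {}" "\<And>u v. H u v \<Longrightarrow> H v u"
  shows "\<exists>p. rel_path H p \<and> set p \<subseteq> S \<and> (\<forall>z\<in>S. H (hd p) z \<longrightarrow> z \<in> set p)"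
proof -
  define P where "P p \<longleftrightarrow> rel_path H p \<and> set p \<subseteq> S" for p
  obtain s where "s \<in> S" using assms(2) by auto
  then have "P [s]" by (simp add: P_def rel_path_def)
  moreover have "\<forall>p. P p \<longrightarrow> length p < Suc (card S)"
  proof (intro allI impI)
    fix p assume "P p"
    then have "distinct p" "set p \<subseteq> S" by (simp_all add: P_def rel_path_def)
    then show "length p < Suc (card S)"
      using card_mono[OF assms(1), of "set p"] distinct_card[of p] by simp
  qed
  ultimately obtain p where p: "P p" and longest: "\<forall>p'. P p' \<longrightarrow> length p' \<le> length p"
    using ex_has_greatest_nat[of P "[s]" length "Suc (card S)"] by auto
  have pne: "p \<noteq> []" and pd: "distinct p" and pS: "set p \<subseteq> S"
    and pc: "\<And>i. Suc i < length p \<Longrightarrow> H (p!i) (p!Suc i)"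
    using p by (auto simp: P_def rel_path_def)
  have "z \<in> set p" if "z \<in> S" "H (hd p) z" for z
  proof (rule ccontr)
    assume "z \<notin> set p"
    have "H z (p!0)" using assms(3)[OF that(2)] pne by (simp add: hd_conv_nth)
    then have "\<forall>i. Suc i < length (z # p) \<longrightarrow> H ((z # p) ! i) ((z # p) ! Suc i)"
      using pc by (auto simp: nth_Cons split: nat.split)
    then have "P (z # p)"
      using \<open>z \<notin> set p\<close> pd pS that(1) by (simp add: P_def rel_path_def)
    then show False using longest by fastforce
  qed
  then show ?thesis using p by (auto simp: P_def)
qed

text \<open>Cut a longest path after the last neighbour of its first vertex.\<close>
lemma rel_cycle_absorbing_nbhd_of_hd:
  assumes "finite S" "S \<noteq> {}" and sym: "\<And>u v. H u v \<Longrightarrow> H v u"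
  shows "\<exists>q. rel_cycle H q \<and> set q \<subseteq> S \<and> (\<forall>z\<in>S. H (hd q) z \<longrightarrow> z \<in> set q)"
proof -
  obtain p where p: "rel_path H p" "set p \<subseteq> S" and nbhd: "\<forall>z\<in>S. H (hd p) z \<longrightarrow> z \<in> set p"
    using rel_path_absorbing_nbhd_of_hd[of S H] assms by blast
  have pne: "p \<noteq> []" and pc: "\<And>i. Suc i < length p \<Longrightarrow> H (p!i) (p!Suc i)"
    using p(1) by (auto simp: rel_path_def)
  define J where "J = {i. i < length p \<and> H (hd p) (p!i)}"
  define j where "j = (if J = {} then 0 else Max J)"
  have finJ: "finite J" unfolding J_def by simp
  have jlt: "j < length p" using pne Max_in[OF finJ] by (auto simp: j_def J_def)
  have last_nbhd: "i \<le> j" if "i \<in> J" for i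
    using that Max_ge[OF finJ] by (auto simp: j_def)
  define q where "q = take (Suc j) p"
  have lq: "length q = Suc j" and qnth: "\<And>i. i \<le> j \<Longrightarrow> q!i = p!i" and hdq: "hd q = hd p"
    using jlt pne by (auto simp: q_def hd_take)
  have "rel_cycle H q"
    unfolding rel_cycle_def
  proof (intro conjI impI allI)
    show "q \<noteq> []" "distinct q" using lq p(1) by (auto simp: q_def rel_path_def)
    fix i assume "2 \<le> length q" "i < length q"
    then have "j \<in> J" using lq Max_in[OF finJ] by (auto simp: j_def split: if_splits)
    then have "H (p!j) (hd p)" using sym[of "hd p" "p!j"] by (simp add: J_def)
    show "H (q!i) (q!(Suc i mod length q))"
    proof (cases "Suc i < length q")
      case True
      then show ?thesis using pc[of i] jlt lq qnth by simp
    next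
      case False
      then have "i = j" using \<open>i < length q\<close> lq by simp
      then show ?thesis using \<open>H (p!j) (hd p)\<close> lq qnth pne by (simp add: hd_conv_nth)
    qed
  qed
  moreover have "set q \<subseteq> S" using p(2) set_take_subset[of "Suc j" p] by (auto simp: q_def)
  moreover have "\<forall>z\<in>S. H (hd q) z \<longrightarrow> z \<in> set q"
  proof (intro ballI impI)
    fix z assume "z \<in> S" "H (hd q) z"
    then have "z \<in> set p" using nbhd hdq by simp
    then obtain i where i: "i < length p" "p!i = z" by (auto simp: in_set_conv_nth)
    then have "i \<le> j" using \<open>H (hd q) z\<close> hdq by (intro last_nbhd) (simp add: J_def)
    then have "q!i \<in> set q" using lq by simp
    then show "z \<in> set q" using qnth[OF \<open>i \<le> j\<close>] i by simp
  qed
  ultimately show ?thesis by (intro exI[of _ q]) simp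
qed

definition cycle_partition :: "('a \<Rightarrow> 'a \<Rightarrow> bool) \<Rightarrow> 'a set \<Rightarrow> nat \<Rightarrow> (nat \<Rightarrow> 'a list) \<Rightarrow> bool" where
  "cycle_partition H S k Q \<longleftrightarrow> (\<forall>i<k. rel_cycle H (Q i)) \<and>
     (\<forall>i<k. \<forall>j<k. i \<noteq> j \<longrightarrow> set (Q i) \<inter> set (Q j) = {}) \<and> S = (\<Union>i<k. set (Q i))"

lemma cycle_partition_extend:
  assumes "cycle_partition H (S - set q) k Q" "rel_cycle H q" "set q \<subseteq> S"
  shows "cycle_partition H S (Suc k) (Q(k := q))"
  using assms unfolding cycle_partition_def
  by (auto simp: less_Suc_eq lessThan_Suc)

text \<open>Repeatedly remove a cycle that absorbs the neighbourhood of its first vertex; these first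
  vertices form an independent set.\<close>
lemma ex_cycle_partition_independent:
  assumes "finite S" and sym: "\<And>u v. H u v \<Longrightarrow> H v u"
  shows "\<exists>k Q I. I \<subseteq> S \<and> pairwise (\<lambda>u v. \<not> H u v) I \<and> k \<le> card I \<and> cycle_partition H S k Q"
  using assms(1)
proof (induction S rule: finite_psubset_induct)
  case (psubset S)
  show ?case
  proof (cases "S = {}")
    case True
    then show ?thesis by (intro exI[of _ 0] exI[of _ "{}"]) (simp add: cycle_partition_def)
  next
    case False
    obtain q where q: "rel_cycle H q" "set q \<subseteq> S" and absorb: "\<forall>z\<in>S. H (hd q) z \<longrightarrow> z \<in> set q"
      using rel_cycle_absorbing_nbhd_of_hd[of S H] psubset.hyps False sym by blast
    have "hd q \<in> set q" using q(1) by (simp add: rel_cycle_def)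
    then have "S - set q \<subset> S" using q(2) by blast
    obtain k Q I where I: "I \<subseteq> S - set q" "pairwise (\<lambda>u v. \<not> H u v) I" "k \<le> card I"
      and Q: "cycle_partition H (S - set q) k Q"
      using psubset.IH[OF \<open>S - set q \<subset> S\<close>] by auto
    have "\<not> H (hd q) w \<and> \<not> H w (hd q)" if "w \<in> I" for w
    proof -
      have "w \<in> S" "w \<notin> set q" using that I(1) by auto
      then have "\<not> H (hd q) w" using absorb by auto
      then show ?thesis using sym[of w "hd q"] by auto
    qed
    then have "pairwise (\<lambda>u v. \<not> H u v) (insert (hd q) I)"
      using I(2) by (simp add: pairwise_insert)
    moreover have "insert (hd q) I \<subseteq> S" using I(1) \<open>hd q \<in> set q\<close> q(2) by blast
    moreover have "Suc k \<le> card (insert (hd q) I)"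
    proof -
      have "hd q \<notin> I" "finite I"
        using I(1) \<open>hd q \<in> set q\<close> finite_subset[OF I(1)] psubset.hyps by auto
      then show ?thesis using I(3) by simp
    qed
    moreover have "cycle_partition H S (Suc k) (Q(k := q))"
      using Q q by (rule cycle_partition_extend)
    ultimately show ?thesis by blast
  qed
qed

lemma ex_cycle_partition_le:
  assumes "finite S" "\<And>u v. H u v \<Longrightarrow> H v u"
    and "\<And>I. I \<subseteq> S \<Longrightarrow> pairwise (\<lambda>u v. \<not> H u v) I \<Longrightarrow> card I \<le> \<alpha>"
  shows "\<exists>k Q. k \<le> \<alpha> \<and> cycle_partition H S k Q"
proof -
  obtain k Q I where "I \<subseteq> S" "pairwise (\<lambda>u v. \<not> H u v) I" "k \<le> card I" "cycle_partition H S k Q"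
    using ex_cycle_partition_independent[of S H] assms(1,2) by blast
  then show ?thesis using assms(3) le_trans by blast
qed

definition interleave :: "'a list \<Rightarrow> (nat \<Rightarrow> 'a) \<Rightarrow> 'a list" where
  "interleave q a = map (\<lambda>n. if even n then q ! (n div 2) else a (n div 2)) [0..<2 * length q]"

lemma length_interleave [simp]: "length (interleave q a) = 2 * length q"
  by (simp add: interleave_def)

lemma nth_interleave:
  "n < 2 * length q \<Longrightarrow> interleave q a ! n = (if even n then q ! (n div 2) else a (n div 2))"
  by (simp add: interleave_def)

lemma interleave_even [simp]: "i < length q \<Longrightarrow> interleave q a ! (2 * i) = q ! i"
  and interleave_odd [simp]: "i < length q \<Longrightarrow> interleave q a ! Suc (2 * i) = a i"
  by (simp_all add: nth_interleave)

lemma set_interleave: "set (interleave q a) = set q \<union> a ` {..<length q}"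
proof
  show "set (interleave q a) \<subseteq> set q \<union> a ` {..<length q}"
    by (auto simp: interleave_def)
  show "set q \<union> a ` {..<length q} \<subseteq> set (interleave q a)"
  proof (intro subsetI)
    fix y assume "y \<in> set q \<union> a ` {..<length q}"
    then obtain i where i: "i < length q" "y = q ! i \<or> y = a i"
      by (auto simp: in_set_conv_nth)
    then have "interleave q a ! (2 * i) \<in> set (interleave q a)"
      and "interleave q a ! Suc (2 * i) \<in> set (interleave q a)"
      by (simp_all del: interleave_even interleave_odd)
    then show "y \<in> set (interleave q a)" using i by auto
  qed
qed

lemma distinct_interleave:
  assumes "distinct q" "inj_on a {..<length q}" "set q \<inter> a ` {..<length q} = {}"
  shows "distinct (interleave q a)"
  unfolding distinct_conv_nth
proof (intro allI impI)
  fix n1 n2 assume n: "n1 < length (interleave q a)" "n2 < length (interleave q a)" "n1 \<noteq> n2"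
  have d: "n1 div 2 < length q" "n2 div 2 < length q" using n by auto
  show "interleave q a ! n1 \<noteq> interleave q a ! n2"
  proof (cases "even n1"; cases "even n2")
    assume "even n1" "even n2"
    then have "n1 div 2 \<noteq> n2 div 2" using n(3) by (metis dvd_mult_div_cancel)
    then show ?thesis using \<open>even n1\<close> \<open>even n2\<close> n d assms(1)
      by (simp add: nth_interleave nth_eq_iff_index_eq)
  next
    assume "odd n1" "odd n2"
    then have "n1 div 2 \<noteq> n2 div 2" using n(3) by (metis odd_two_times_div_two_succ)
    then show ?thesis using \<open>odd n1\<close> \<open>odd n2\<close> n d assms(2)
      by (simp add: nth_interleave inj_on_eq_iff)
  next
    assume "even n1" "odd n2"
    then have "interleave q a ! n1 = q ! (n1 div 2)" "interleave q a ! n2 = a (n2 div 2)"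
      using n by (simp_all add: nth_interleave)
    moreover have "q ! (n1 div 2) \<in> set q" "a (n2 div 2) \<in> a ` {..<length q}" using d by auto
    ultimately show ?thesis using assms(3) by (metis disjoint_iff)
  next
    assume "odd n1" "even n2"
    then have "interleave q a ! n1 = a (n1 div 2)" "interleave q a ! n2 = q ! (n2 div 2)"
      using n by (simp_all add: nth_interleave)
    moreover have "q ! (n2 div 2) \<in> set q" "a (n1 div 2) \<in> a ` {..<length q}" using d by auto
    ultimately show ?thesis using assms(3) by (metis disjoint_iff)
  qed
qed

lemma rel_cycle_interleave:
  assumes "q \<noteq> []" "distinct q" "inj_on a {..<length q}" "set q \<inter> a ` {..<length q} = {}"
    and edges: "\<And>i. i < length q \<Longrightarrow> P (q ! i) (a i) \<and> P (a i) (q ! (Suc i mod length q))"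
  shows "rel_cycle P (interleave q a)"
  unfolding rel_cycle_def
proof (intro conjI impI allI)
  define m where "m = length q"
  show "interleave q a \<noteq> []" using assms(1) by (simp add: interleave_def)
  show "distinct (interleave q a)" using assms(2-4) by (rule distinct_interleave)
  fix n assume "n < length (interleave q a)"
  then have n: "n < 2 * m" by (simp add: m_def)
  show "P (interleave q a ! n) (interleave q a ! (Suc n mod length (interleave q a)))"
  proof (cases "even n")
    case True
    then obtain i where i: "n = 2 * i" by blast
    then have "Suc n < 2 * m" using n by presburger
    then have "Suc n mod (2 * m) = Suc (2 * i)" using i by simp
    then show ?thesis using edges[of i] i n by (simp add: m_def)
  next
    case False
    then obtain i where i: "n = 2 * i + 1" by (metis oddE)
    then have "Suc n mod (2 * m) = 2 * (Suc i mod m)" using mod_mult_mult1[of 2 "Suc i" m] by simp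
    moreover have "Suc i mod m < m" using n i by simp
    ultimately show ?thesis using edges[of i] i n by (simp add: m_def)
  qed
qed

section \<open>Local colourings of a complete bipartite graph\<close>

locale local_bip_colouring =
  fixes r :: nat and A B :: "'a set" and c :: "'a set \<Rightarrow> 'c"
  assumes finite_A: "finite A" and finite_B: "finite B" and disjoint_AB: "A \<inter> B = {}"
    and local: "local_colouring r A B c"
begin

definition colour_nbhd :: "'c \<Rightarrow> 'a \<Rightarrow> 'a set" where
  "colour_nbhd x b = {a\<in>A. c {a, b} = x}"

lemma ex_popular_colour:
  assumes "b \<in> B"
  shows "\<exists>x. card A \<le> r * card (colour_nbhd x b)"
proof (cases "A = {}")
  case False
  define Col where "Col = (\<lambda>a. c {a, b}) ` A"
  have "card Col \<le> r" using local assms by (simp add: local_colouring_def Col_def)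
  have "finite Col" "Col \<noteq> {}" using finite_A False by (simp_all add: Col_def)
  define M where "M = Max ((\<lambda>x. card (colour_nbhd x b)) ` Col)"
  have "M \<in> (\<lambda>x. card (colour_nbhd x b)) ` Col"
    unfolding M_def using \<open>finite Col\<close> \<open>Col \<noteq> {}\<close> by (intro Max_in) auto
  then obtain x where "M = card (colour_nbhd x b)" by auto
  have "A = (\<Union>y\<in>Col. colour_nbhd y b)" by (auto simp: Col_def colour_nbhd_def)
  then have "card A \<le> (\<Sum>y\<in>Col. card (colour_nbhd y b))"
    using card_UN_le[OF \<open>finite Col\<close>] by metis
  also have "\<dots> \<le> card Col * M"
    using sum_bounded_above[of Col "\<lambda>y. card (colour_nbhd y b)" M] \<open>finite Col\<close>
    by (auto simp: M_def)
  also have "\<dots> \<le> r * M" using \<open>card Col \<le> r\<close> by simp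
  finally show ?thesis using \<open>M = card (colour_nbhd x b)\<close> by blast
qed simp

definition main_colour :: "'a \<Rightarrow> 'c" where
  "main_colour b = (SOME x. card A \<le> r * card (colour_nbhd x b))"

definition main_nbhd :: "'a \<Rightarrow> 'a set" where
  "main_nbhd b = colour_nbhd (main_colour b) b"

lemma card_A_le_card_main_nbhd: "b \<in> B \<Longrightarrow> card A \<le> r * card (main_nbhd b)"
  unfolding main_nbhd_def main_colour_def by (rule someI_ex) (rule ex_popular_colour)

lemma main_nbhd_subset: "main_nbhd b \<subseteq> A"
  by (auto simp: main_nbhd_def colour_nbhd_def)

lemma finite_main_nbhd: "finite (main_nbhd b)"
  using finite_subset[OF main_nbhd_subset finite_A] .

text \<open>The threshold \<open>|B|\<close> leaves room for distinct connectors however many vertices of \<open>A\<close>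
  earlier cycles have used.\<close>
definition linked :: "'a \<Rightarrow> 'a \<Rightarrow> bool" where
  "linked u v \<longleftrightarrow> main_colour u = main_colour v \<and> card B \<le> card (main_nbhd u \<inter> main_nbhd v)"

lemma linked_sym: "linked u v \<Longrightarrow> linked v u"
  unfolding linked_def by (auto simp: Int_commute)

lemma double_card_main_nbhds_containing_le:
  assumes "a \<in> A" "finite J" "J \<subseteq> B"
  shows "2 * card {b\<in>J. a \<in> main_nbhd b} \<le> 2 * r +
    card {(u,v)\<in>J\<times>J. u \<noteq> v \<and> main_colour u = main_colour v \<and> a \<in> main_nbhd u \<and> a \<in> main_nbhd v}"
proof -
  define K where "K = {b\<in>J. a \<in> main_nbhd b}"
  have "main_colour ` K \<subseteq> (\<lambda>b. c {a, b}) ` B"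
    using assms(3) by (force simp: K_def main_nbhd_def colour_nbhd_def)
  moreover have "card ((\<lambda>b. c {a, b}) ` B) \<le> r"
    using local assms(1) by (simp add: local_colouring_def)
  ultimately have "card (main_colour ` K) \<le> r"
    using finite_B by (meson card_mono finite_imageI le_trans)
  moreover have "{(u,v)\<in>K\<times>K. u \<noteq> v \<and> main_colour u = main_colour v} =
      {(u,v)\<in>J\<times>J. u \<noteq> v \<and> main_colour u = main_colour v \<and> a \<in> main_nbhd u \<and> a \<in> main_nbhd v}"
    by (auto simp: K_def)
  ultimately show ?thesis
    using card_le_card_image_plus_collisions[of K main_colour] assms(2) by (simp add: K_def)
qed

lemma card_same_colour_pairs_le:
  assumes "finite J"
  shows "card {(u,v)\<in>J\<times>J. u \<noteq> v \<and> main_colour u = main_colour v} \<le> card J * (card J - 1)"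
proof -
  have "card {(u,v)\<in>J\<times>J. u \<noteq> v \<and> main_colour u = main_colour v} \<le> card (Sigma J (\<lambda>u. J - {u}))"
    using assms by (intro card_mono) auto
  also have "\<dots> = card J * (card J - 1)" using assms by (simp add: card_SigmaI)
  finally show ?thesis .
qed

lemma sum_card_main_nbhd_le:
  assumes "finite J" "J \<subseteq> B" "pairwise (\<lambda>u v. \<not> linked u v) J"
  shows "2 * (\<Sum>b\<in>J. card (main_nbhd b)) \<le> 2 * r * card A + card J * (card J - 1) * (card B - 1)"
proof -
  define Q where "Q = {(u,v)\<in>J\<times>J. u \<noteq> v \<and> main_colour u = main_colour v}"
  define common where "common p = {a\<in>A. a \<in> main_nbhd (fst p) \<and> a \<in> main_nbhd (snd p)}" for p
  have "finite Q" using assms(1) by (auto simp: Q_def intro: finite_subset[of _ "J \<times> J"])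
  have "(\<Sum>b\<in>J. card (main_nbhd b)) = (\<Sum>a\<in>A. card {b\<in>J. a \<in> main_nbhd b})"
  proof -
    have "(\<Sum>b\<in>J. card (main_nbhd b)) = (\<Sum>b\<in>J. card {a\<in>A. a \<in> main_nbhd b})"
      using main_nbhd_subset by (intro sum.cong) (auto intro!: arg_cong[where f = card])
    then show ?thesis using sum_card_Collect_swap[OF finite_A assms(1)] by simp
  qed
  then have "2 * (\<Sum>b\<in>J. card (main_nbhd b)) = (\<Sum>a\<in>A. 2 * card {b\<in>J. a \<in> main_nbhd b})"
    by (simp add: sum_distrib_left)
  also have "\<dots> \<le> (\<Sum>a\<in>A. 2 * r + card {p\<in>Q. a \<in> common p})"
  proof (rule sum_mono)
    fix a assume "a \<in> A"
    then have "{(u,v)\<in>J\<times>J. u \<noteq> v \<and> main_colour u = main_colour v \<and> a \<in> main_nbhd u \<and> a \<in> main_nbhd v}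
        = {p\<in>Q. a \<in> common p}"
      by (auto simp: Q_def common_def)
    then show "2 * card {b\<in>J. a \<in> main_nbhd b} \<le> 2 * r + card {p\<in>Q. a \<in> common p}"
      using double_card_main_nbhds_containing_le[OF \<open>a \<in> A\<close> assms(1,2)] by simp
  qed
  also have "\<dots> = 2 * r * card A + (\<Sum>p\<in>Q. card (common p))"
    using sum_card_Collect_swap[OF finite_A \<open>finite Q\<close>, of "\<lambda>a p. a \<in> common p"]
    by (simp add: sum.distrib common_def)
  also have "(\<Sum>p\<in>Q. card (common p)) \<le> card Q * (card B - 1)"
  proof -
    have "card (common p) \<le> card B - 1" if p: "p \<in> Q" for p
    proof -
      obtain u v where "p = (u, v)" "u \<in> J" "v \<in> J" "u \<noteq> v" "main_colour u = main_colour v"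
        using p by (auto simp: Q_def)
      moreover have "\<not> linked u v" using assms(3) calculation by (auto simp: pairwise_def)
      moreover have "common p = main_nbhd u \<inter> main_nbhd v"
        using main_nbhd_subset \<open>p = (u, v)\<close> by (auto simp: common_def)
      ultimately show ?thesis by (simp add: linked_def)
    qed
    then show ?thesis using sum_bounded_above[of Q "\<lambda>p. card (common p)"] by simp
  qed
  also have "card Q \<le> card J * (card J - 1)"
    using card_same_colour_pairs_le[OF assms(1)] by (simp add: Q_def)
  finally show ?thesis by (simp add: mult_le_mono1)
qed

lemma card_unlinked_le:
  assumes "r \<ge> 1" "r ^ (r + 3) * card B \<le> card A"
    and "I \<subseteq> B" "pairwise (\<lambda>u v. \<not> linked u v) I"
  shows "card I \<le> r\<^sup>2"
proof (rule ccontr)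
  assume "\<not> card I \<le> r\<^sup>2"
  then obtain J where J: "J \<subseteq> I" "card J = r\<^sup>2 + 1"
    using obtain_subset_with_card_n[of "r\<^sup>2 + 1" I] by force
  define n where "n = r\<^sup>2 + 1"
  define S where "S = (\<Sum>b\<in>J. card (main_nbhd b))"
  have "finite J" "J \<subseteq> B" using J assms(3) by (auto intro: card_ge_0_finite)
  have "1 \<le> card B"
    using card_mono[OF finite_B \<open>J \<subseteq> B\<close>] J(2) by simp
  have lower: "n * card A \<le> r * S"
  proof -
    have "n * card A = (\<Sum>b\<in>J. card A)" using J(2) by (simp add: n_def)
    also have "\<dots> \<le> (\<Sum>b\<in>J. r * card (main_nbhd b))"
      using \<open>J \<subseteq> B\<close> card_A_le_card_main_nbhd by (intro sum_mono) auto
    finally show ?thesis by (simp add: S_def sum_distrib_left)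
  qed
  have upper: "2 * S \<le> 2 * r * card A + n * r\<^sup>2 * (card B - 1)"
    using sum_card_main_nbhd_le[OF \<open>finite J\<close> \<open>J \<subseteq> B\<close> pairwise_subset[OF assms(4) J(1)]] J(2)
    by (simp add: S_def n_def)
  have "2 * n * card A \<le> r * (2 * S)" using lower by simp
  also have "\<dots> \<le> r * (2 * r * card A + n * r\<^sup>2 * (card B - 1))"
    using upper by (rule mult_le_mono2)
  also have "\<dots> = 2 * r\<^sup>2 * card A + r ^ 3 * n * (card B - 1)"
    by (simp add: algebra_simps power2_eq_square power3_eq_cube)
  finally have "2 * card A \<le> r ^ 3 * n * (card B - 1)"
    by (simp add: n_def algebra_simps)
  also have "\<dots> < r ^ 3 * n * card B"
    using \<open>1 \<le> card B\<close> assms(1) by (simp add: n_def)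
  also have "\<dots> \<le> r ^ 3 * (2 * r ^ r) * card B"
    using square_plus_one_le_two_pow_self[OF assms(1)]
    by (intro mult_le_mono1 mult_le_mono2) (simp add: n_def)
  also have "\<dots> = 2 * (r ^ (r + 3) * card B)" by (simp add: power_add)
  also have "\<dots> \<le> 2 * card A" using assms(2) by simp
  finally show False by simp
qed

lemma main_colour_constant_on_linked_cycle:
  assumes "rel_cycle linked q" "i < length q"
  shows "main_colour (q ! i) = main_colour (q ! 0)"
  using assms(2)
proof (induction i)
  case (Suc i)
  then have "\<forall>j<length q. linked (q ! j) (q ! (Suc j mod length q))"
    using assms(1) by (simp add: rel_cycle_def)
  then have "linked (q ! i) (q ! Suc i)"
    using Suc.prems by (metis Suc_lessD mod_less)
  then show ?case using Suc by (simp add: linked_def)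
qed simp

text \<open>Each of the \<open>length q\<close> gaps has at least \<open>|B| - |U| \<ge> length q\<close> candidate connectors,
  so distinct ones can be chosen greedily.\<close>
lemma ex_mono_cycle_through_linked_cycle:
  assumes "rel_cycle linked q" "set q \<subseteq> B" "U \<subseteq> A" "card U + length q \<le> card B"
  shows "\<exists>C col W. mono_cycle A B c col C \<and> set C = set q \<union> W \<and> W \<subseteq> A - U \<and> card W \<le> length q"
proof (cases "length q = 1")
  case True
  then have "mono_cycle A B c col q" for col
    using assms(1,2) by (auto simp: mono_cycle_def rel_cycle_def)
  then show ?thesis by (intro exI[of _ q] exI[of _ undefined] exI[of _ "{}"]) simp
next
  case False
  define m where "m = length q"
  have "q \<noteq> []" "distinct q" using assms(1) by (simp_all add: rel_cycle_def)
  then have "length q \<noteq> 0" by simp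
  then have "2 \<le> m" using False unfolding m_def by linarith
  then have links: "linked (q ! i) (q ! (Suc i mod m))" if "i < m" for i
    using assms(1) that by (simp add: rel_cycle_def m_def)
  define G where "G i = main_nbhd (q ! i) \<inter> main_nbhd (q ! (Suc i mod m)) - U" for i
  have "finite (G i) \<and> m \<le> card (G i)" if "i < m" for i
  proof
    show "finite (G i)" using finite_main_nbhd by (simp add: G_def)
    have "card B \<le> card (main_nbhd (q ! i) \<inter> main_nbhd (q ! (Suc i mod m)))"
      using links[OF that] by (simp add: linked_def)
    moreover have "card (main_nbhd (q ! i) \<inter> main_nbhd (q ! (Suc i mod m))) - card U \<le> card (G i)"
      unfolding G_def using finite_subset[OF assms(3) finite_A] by (rule diff_card_le_card_Diff)
    ultimately show "m \<le> card (G i)" using assms(4) by (simp add: m_def)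
  qed
  then obtain a where a_inj: "inj_on a {..<m}" and a_G: "\<forall>i<m. a i \<in> G i"
    using inj_choice_from_large_sets[of m m G] by auto
  have a_A: "a i \<in> A - U" if "i < m" for i
    using a_G that main_nbhd_subset by (auto simp: G_def)
  have q_B: "q ! i \<in> B" if "i < m" for i using assms(2) that by (auto simp: m_def)
  define col where "col = main_colour (q ! 0)"
  have "c {q ! i, a i} = col" "c {a i, q ! (Suc i mod m)} = col" if "i < m" for i
  proof -
    have "Suc i mod m < m" using \<open>2 \<le> m\<close> by simp
    then have "main_colour (q ! i) = col" "main_colour (q ! (Suc i mod m)) = col"
      using main_colour_constant_on_linked_cycle[OF assms(1)] that by (simp_all add: col_def m_def)
    then show "c {q ! i, a i} = col" "c {a i, q ! (Suc i mod m)} = col"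
      using a_G that
      by (auto simp: G_def main_nbhd_def colour_nbhd_def insert_commute)
  qed
  moreover have "set q \<inter> a ` {..<m} = {}"
    using a_A q_B disjoint_AB by (fastforce simp: m_def in_set_conv_nth)
  ultimately have "rel_cycle (\<lambda>x y. bip_edge A B x y \<and> c {x, y} = col) (interleave q a)"
    using \<open>q \<noteq> []\<close> \<open>distinct q\<close> a_inj a_A q_B \<open>2 \<le> m\<close>
    by (intro rel_cycle_interleave) (auto simp: m_def bip_edge_def)
  moreover have set_C: "set (interleave q a) = set q \<union> a ` {..<m}"
    by (simp add: set_interleave m_def)
  moreover have W: "a ` {..<m} \<subseteq> A - U" using a_A by auto
  ultimately have "mono_cycle A B c col (interleave q a)"
    using assms(2) unfolding mono_cycle_iff_rel_cycle by blast
  moreover have "card (a ` {..<m}) \<le> length q"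
    using card_image_le[of "{..<m}" a] by (simp add: m_def)
  ultimately show ?thesis using set_C W by blast
qed

lemma ex_mono_cycles_through_linked_cycles:
  fixes k :: nat
  assumes "\<forall>i<k. rel_cycle linked (Q i) \<and> set (Q i) \<subseteq> B"
    and "\<forall>i<k. \<forall>j<k. i \<noteq> j \<longrightarrow> set (Q i) \<inter> set (Q j) = {}"
    and "(\<Sum>i<k. length (Q i)) \<le> card B"
  shows "\<exists>C col. (\<forall>i<k. mono_cycle A B c (col i) (C i) \<and> set (Q i) \<subseteq> set (C i) \<and>
                          set (C i) \<subseteq> set (Q i) \<union> A) \<and>
     (\<forall>i<k. \<forall>j<k. i \<noteq> j \<longrightarrow> set (C i) \<inter> set (C j) = {}) \<and>
     card (A \<inter> (\<Union>i<k. set (C i))) \<le> (\<Sum>i<k. length (Q i))"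
  using assms
proof (induction k)
  case 0
  then show ?case by simp
next
  case (Suc k)
  have "\<forall>i<k. rel_cycle linked (Q i) \<and> set (Q i) \<subseteq> B"
    "\<forall>i<k. \<forall>j<k. i \<noteq> j \<longrightarrow> set (Q i) \<inter> set (Q j) = {}"
    "(\<Sum>i<k. length (Q i)) \<le> card B"
    using Suc.prems by auto
  then obtain C col where
    C: "\<forall>i<k. mono_cycle A B c (col i) (C i) \<and> set (Q i) \<subseteq> set (C i) \<and> set (C i) \<subseteq> set (Q i) \<union> A"
    and C_disj: "\<forall>i<k. \<forall>j<k. i \<noteq> j \<longrightarrow> set (C i) \<inter> set (C j) = {}"
    and budget: "card (A \<inter> (\<Union>i<k. set (C i))) \<le> (\<Sum>i<k. length (Q i))"
    using Suc.IH by auto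
  define U where "U = A \<inter> (\<Union>i<k. set (C i))"
  have Qk: "rel_cycle linked (Q k)" "set (Q k) \<subseteq> B" using Suc.prems(1) by auto
  have "U \<subseteq> A" "card U + length (Q k) \<le> card B"
    using budget Suc.prems(3) by (auto simp: U_def)
  then obtain cyc col' W where cyc: "mono_cycle A B c col' cyc" "set cyc = set (Q k) \<union> W"
    and W: "W \<subseteq> A - U" "card W \<le> length (Q k)"
    using ex_mono_cycle_through_linked_cycle[OF Qk] by blast
  have "set (C i) \<inter> set cyc = {}" if "i < k" for i
  proof -
    have "set (Q i) \<inter> set (Q k) = {}" using Suc.prems(2) that by auto
    moreover have "set (C i) \<subseteq> set (Q i) \<union> A" "A \<inter> set (C i) \<subseteq> U"
      using C that by (auto simp: U_def)
    moreover have "set (Q i) \<subseteq> B" using Suc.prems(1) that by auto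
    ultimately show ?thesis using cyc(2) W(1) Qk(2) disjoint_AB by blast
  qed
  then have "\<forall>i<Suc k. \<forall>j<Suc k. i \<noteq> j \<longrightarrow> set ((C(k := cyc)) i) \<inter> set ((C(k := cyc)) j) = {}"
    using C_disj by (auto simp: less_Suc_eq)
  moreover have "\<forall>i<Suc k. mono_cycle A B c ((col(k := col')) i) ((C(k := cyc)) i) \<and>
      set (Q i) \<subseteq> set ((C(k := cyc)) i) \<and> set ((C(k := cyc)) i) \<subseteq> set (Q i) \<union> A"
    using C cyc W(1) by (auto simp: less_Suc_eq)
  moreover have "card (A \<inter> (\<Union>i<Suc k. set ((C(k := cyc)) i))) \<le> (\<Sum>i<Suc k. length (Q i))"
  proof -
    have "A \<inter> (\<Union>i<Suc k. set ((C(k := cyc)) i)) \<subseteq> U \<union> W"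
      using cyc(2) Qk(2) disjoint_AB by (auto simp: U_def lessThan_Suc)
    then have "card (A \<inter> (\<Union>i<Suc k. set ((C(k := cyc)) i))) \<le> card (U \<union> W)"
      using finite_A \<open>U \<subseteq> A\<close> W(1) by (intro card_mono) (auto intro: finite_subset)
    also have "\<dots> \<le> card U + card W" by (rule card_Un_le)
    finally show ?thesis using budget W(2) by (simp add: U_def)
  qed
  ultimately show ?case by blast
qed

lemma cover_by_mono_cycles:
  assumes "r \<ge> 1" "r ^ (r + 3) * card B \<le> card A"
  shows "\<exists>k C col. k \<le> r\<^sup>2 \<and> (\<forall>i<k. mono_cycle A B c (col i) (C i)) \<and>
           (\<forall>i<k. \<forall>j<k. i \<noteq> j \<longrightarrow> set (C i) \<inter> set (C j) = {}) \<and>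
           B \<subseteq> (\<Union>i<k. set (C i))"
proof -
  obtain k Q where "k \<le> r\<^sup>2" and Q: "cycle_partition linked B k Q"
    using ex_cycle_partition_le[of B linked "r\<^sup>2", OF finite_B linked_sym card_unlinked_le[OF assms]]
    by blast
  then have "\<forall>i<k. rel_cycle linked (Q i) \<and> set (Q i) \<subseteq> B"
    and "\<forall>i<k. \<forall>j<k. i \<noteq> j \<longrightarrow> set (Q i) \<inter> set (Q j) = {}"
    and "B = (\<Union>i<k. set (Q i))"
    by (auto simp: cycle_partition_def)
  moreover have "(\<Sum>i<k. length (Q i)) = card B"
    using sum_length_disjoint_distinct[of k Q] calculation by (simp add: rel_cycle_def)
  ultimately obtain C col where
    "\<forall>i<k. mono_cycle A B c (col i) (C i) \<and> set (Q i) \<subseteq> set (C i) \<and> set (C i) \<subseteq> set (Q i) \<union> A"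
    "\<forall>i<k. \<forall>j<k. i \<noteq> j \<longrightarrow> set (C i) \<inter> set (C j) = {}"
    using ex_mono_cycles_through_linked_cycles[of k Q] by auto
  moreover have "B \<subseteq> (\<Union>i<k. set (C i))"
    using calculation \<open>B = (\<Union>i<k. set (Q i))\<close> by blast
  ultimately show ?thesis using \<open>k \<le> r\<^sup>2\<close> by blast
qed

end

theorem lemma2p2:
  fixes r :: nat and A B :: "'a set" and c :: "'a set \<Rightarrow> 'c"
  assumes "r \<ge> 1"
    and "finite A" and "finite B" and "A \<inter> B = {}"
    and "real (card B) \<le> real (card A) / real r ^ (r + 3)"
    and "local_colouring r A B c"
  shows "\<exists>k :: nat. \<exists>C :: nat \<Rightarrow> 'a list. \<exists>col :: nat \<Rightarrow> 'c.
           k \<le> r ^ 2 \<and>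
           (\<forall>i<k. mono_cycle A B c (col i) (C i)) \<and>
           (\<forall>i<k. \<forall>j<k. i \<noteq> j \<longrightarrow> set (C i) \<inter> set (C j) = {}) \<and>
           B \<subseteq> (\<Union>i<k. set (C i))"
proof -
  interpret local_bip_colouring r A B c
    using assms(2-4,6) by unfold_locales
  have "real (r ^ (r + 3) * card B) \<le> real (card A)"
    using assms(1,5) by (simp add: field_simps)
  then have "r ^ (r + 3) * card B \<le> card A" by linarith
  then show ?thesis using cover_by_mono_cycles[OF assms(1)] by blast
qed

end
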